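(* Let $k,n\in\mathbb{N}$, let $w\in\mathbb{R}^+$, let $f,g:\mathbb{N}\to\mathbb{R}^+$ be increasing functions, and let $\mathcal{H}$ be a class of graphs such that $\widehat{\mathcal{H}}$ admits $(f,g)$-fan-partitions. Let $G$ be an $n$-vertex graph with a star-decomposition $(B_s:s\in V(S))$ of adhesion at most $k$ such that, if $r$ is the centre of the star $S$, then $\langle B_r\rangle_G\in\mathcal{H}$, and $|B_s\setminus B_r|\leq w$ for every $s\in V(S)\setminus\{r\}$. Then there exists $X\subseteq V(G)$ with $|X|\leq f(kn)$ such that $G-X$ admits a path-partition of width at most $\max(2g(kn),w)$.
   Context: $\mathbb{R}^+$ is the set of strictly positive reals, $\mathbb{N}=\{1,2,\dots\}$; $f$ is increasing if $n<m$ implies $f(n)<f(m)$. A class of graphs is closed under isomorphism. For a class $\mathcal{H}$, $\widehat{\mathcal{H}}$ denotes the class of graphs $G$ having a set $Z\subseteq V(G)$ of degree-$1$ vertices of $G$ with $G-Z\in\mathcal{H}$. A tree-decomposition of $G$ is a family $(B_t\subseteq V(G):t\in V(T))$ indexed by a tree $T$ such that for each $v\in V(G)$ the set $\{t:v\in B_t\}$ induces a nonempty subtree of $T$, and each edge of $G$ has both ends in some $B_t$. It is a star-decomposition if $T$ is a star (a tree with a vertex, the centre, adjacent to all others). Its adhesion is $\max_{tt'\in E(T)}|B_t\cap B_{t'}|$. The torso $\langle B_t\rangle_G$ is obtained from $G[B_t]$ by adding an edge $uv$ whenever $u,v\in B_t\cap B_{t'}$ for some $tt'\in E(T)$. A partition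 of $G$ is a collection of pairwise disjoint (possibly empty) subsets of $V(G)$ with union $V(G)$; its width is its largest part size; it is a path-partition if its quotient (parts as vertices, adjacent when joined by an edge of $G$) is isomorphic to a subgraph of a path. A $(k,w)$-fan-partition of $G$ is a partition with a part $P$, $|P|\leq k$, such that the remaining parts form a path-partition of $G-P$ of width at most $w$. A class $\mathcal{G}$ admits $(f,g)$-fan-partitions if every $G\in\mathcal{G}$ admits an $(f(|V(G)|),g(|V(G)|))$-fan-partition. *)

theory Defs
  imports Complex_Main
begin

(* A (finite simple) graph: vertex set and set of 2-element edges. Vertices are natural numbers;
   every finite graph is isomorphic to one of this form. *)
type_synonym graph = "nat set \<times> nat set set"

definition verts :: "graph \<Rightarrow> nat set" where "verts G = fst G"
definition edges :: "graph \<Rightarrow> nat set set" where "edges G = snd G"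

definition is_graph :: "graph \<Rightarrow> bool" where
  "is_graph G \<longleftrightarrow> finite (verts G) \<and>
     (\<forall>e\<in>edges G. \<exists>u v. e = {u, v} \<and> u \<noteq> v \<and> u \<in> verts G \<and> v \<in> verts G)"

definition graph_iso :: "graph \<Rightarrow> graph \<Rightarrow> bool" where
  "graph_iso G H \<longleftrightarrow> (\<exists>\<phi>. bij_betw \<phi> (verts G) (verts H) \<and>
     (\<forall>u\<in>verts G. \<forall>v\<in>verts G. {u, v} \<in> edges G \<longleftrightarrow> {\<phi> u, \<phi> v} \<in> edges H))"

definition graph_class :: "(graph \<Rightarrow> bool) \<Rightarrow> bool" where
  "graph_class C \<longleftrightarrow> (\<forall>G. C G \<longrightarrow> is_graph G) \<and>
     (\<forall>G H. C G \<longrightarrow> is_graph H \<longrightarrow> graph_iso G H \<longrightarrow> C H)"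

definition degree :: "graph \<Rightarrow> nat \<Rightarrow> nat" where
  "degree G v = card {u \<in> verts G. {v, u} \<in> edges G}"

definition del_verts :: "graph \<Rightarrow> nat set \<Rightarrow> graph" where
  "del_verts G X = (verts G - X, {e \<in> edges G. e \<inter> X = {}})"

definition hat_class :: "(graph \<Rightarrow> bool) \<Rightarrow> graph \<Rightarrow> bool" where
  "hat_class C G \<longleftrightarrow> is_graph G \<and>
     (\<exists>Z \<subseteq> verts G. (\<forall>z\<in>Z. degree G z = 1) \<and> C (del_verts G Z))"

(* partitions: pairwise disjoint, possibly empty, subsets with union V(G) *)
definition is_partition :: "graph \<Rightarrow> nat set set \<Rightarrow> bool" where
  "is_partition G \<P> \<longleftrightarrow> (\<forall>P\<in>\<P>. \<forall>Q\<in>\<P>. P \<noteq> Q \<longrightarrow> P \<inter> Q = {}) \<and> \<Union>\<P> = verts G"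

definition width_le :: "nat set set \<Rightarrow> real \<Rightarrow> bool" where
  "width_le \<P> w \<longleftrightarrow> (\<forall>P\<in>\<P>. real (card P) \<le> w)"

definition parts_adjacent :: "graph \<Rightarrow> nat set \<Rightarrow> nat set \<Rightarrow> bool" where
  "parts_adjacent G P Q \<longleftrightarrow> P \<noteq> Q \<and> (\<exists>u\<in>P. \<exists>v\<in>Q. {u, v} \<in> edges G)"

(* the quotient is isomorphic to a subgraph of a path: the parts embed injectively into
   the vertices 0,1,2,... of a path so that adjacent parts go to consecutive vertices *)
definition is_path_partition :: "graph \<Rightarrow> nat set set \<Rightarrow> bool" where
  "is_path_partition G \<P> \<longleftrightarrow> is_partition G \<P> \<and>
     (\<exists>\<phi> :: nat set \<Rightarrow> nat. inj_on \<phi> \<P> \<and>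
        (\<forall>P\<in>\<P>. \<forall>Q\<in>\<P>. parts_adjacent G P Q \<longrightarrow>
            \<phi> P = Suc (\<phi> Q) \<or> \<phi> Q = Suc (\<phi> P)))"

definition has_path_partition_width :: "graph \<Rightarrow> real \<Rightarrow> bool" where
  "has_path_partition_width G w \<longleftrightarrow> (\<exists>\<P>. is_path_partition G \<P> \<and> width_le \<P> w)"

definition has_fan_partition :: "graph \<Rightarrow> real \<Rightarrow> real \<Rightarrow> bool" where
  "has_fan_partition G k w \<longleftrightarrow> (\<exists>\<P> P. is_partition G \<P> \<and> P \<in> \<P> \<and> real (card P) \<le> k \<and>
      is_path_partition (del_verts G P) (\<P> - {P}) \<and> width_le (\<P> - {P}) w)"

(* f,g are defined on \<nat> = {1,2,...}, so the condition is imposed on graphs with \<ge> 1 vertex *)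
definition admits_fan_partitions :: "(graph \<Rightarrow> bool) \<Rightarrow> (nat \<Rightarrow> real) \<Rightarrow> (nat \<Rightarrow> real) \<Rightarrow> bool" where
  "admits_fan_partitions C f g \<longleftrightarrow>
     (\<forall>G. C G \<longrightarrow> card (verts G) \<ge> 1 \<longrightarrow>
        has_fan_partition G (f (card (verts G))) (g (card (verts G))))"

definition pos_increasing :: "(nat \<Rightarrow> real) \<Rightarrow> bool" where
  "pos_increasing f \<longleftrightarrow> (\<forall>m. 1 \<le> m \<longrightarrow> f m > 0) \<and> (\<forall>m m'. 1 \<le> m \<longrightarrow> m < m' \<longrightarrow> f m < f m')"

definition connected_in :: "'b set set \<Rightarrow> 'b set \<Rightarrow> bool" where
  "connected_in ET S \<longleftrightarrow> (\<forall>x\<in>S. \<forall>y\<in>S. (\<lambda>a b. a \<in> S \<and> b \<in> S \<and> {a, b} \<in> ET)\<^sup>*\<^sup>* x y)"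

definition is_star :: "'b set \<Rightarrow> 'b set set \<Rightarrow> 'b \<Rightarrow> bool" where
  "is_star VT ET r \<longleftrightarrow> finite VT \<and> r \<in> VT \<and> ET = {{r, s} | s. s \<in> VT \<and> s \<noteq> r}"

definition is_tree_decomposition :: "graph \<Rightarrow> 'b set \<Rightarrow> 'b set set \<Rightarrow> ('b \<Rightarrow> nat set) \<Rightarrow> bool" where
  "is_tree_decomposition G VT ET B \<longleftrightarrow>
     (\<forall>t\<in>VT. B t \<subseteq> verts G) \<and>
     (\<forall>v\<in>verts G. {t \<in> VT. v \<in> B t} \<noteq> {} \<and> connected_in ET {t \<in> VT. v \<in> B t}) \<and>
     (\<forall>e\<in>edges G. \<exists>t\<in>VT. e \<subseteq> B t)"

definition is_star_decomposition :: "graph \<Rightarrow> 'b set \<Rightarrow> 'b set set \<Rightarrow> 'b \<Rightarrow> ('b \<Rightarrow> nat set) \<Rightarrow> bool" where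
  "is_star_decomposition G VS ES r B \<longleftrightarrow> is_star VS ES r \<and> is_tree_decomposition G VS ES B"

definition adhesion_le :: "'b set set \<Rightarrow> ('b \<Rightarrow> nat set) \<Rightarrow> nat \<Rightarrow> bool" where
  "adhesion_le ET B k \<longleftrightarrow> (\<forall>t t'. {t, t'} \<in> ET \<longrightarrow> card (B t \<inter> B t') \<le> k)"

definition torso :: "graph \<Rightarrow> 'b set set \<Rightarrow> ('b \<Rightarrow> nat set) \<Rightarrow> 'b \<Rightarrow> graph" where
  "torso G ET B t = (B t,
     {e \<in> edges G. e \<subseteq> B t} \<union>
     {{u, v} | u v t'. u \<noteq> v \<and> {t, t'} \<in> ET \<and> u \<in> B t \<inter> B t' \<and> v \<in> B t \<inter> B t'})"

end

theory Submission
  imports Defs "HOL-Library.Nat_Bijection"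
begin

text \<open>
  Attach to the torso of the centre bag \<open>B r\<close> one pendant vertex for every pair \<open>(x, v)\<close> with
  \<open>x \<notin> B r\<close> and \<open>v\<close> in the adhesion set of the leaf bag containing \<open>x\<close>. The resulting graph lies
  in \<open>\<widehat>\<H>\<close> and has at most \<open>kn\<close> vertices, so it has a fan-partition: a set \<open>P\<close> of at most
  \<open>f(kn)\<close> vertices and a path-labelling of the rest with levels of size at most \<open>g(kn)\<close>.
  A vertex \<open>x \<notin> B r\<close> is represented by its pendant hanging from some vertex of its adhesion set
  outside \<open>P\<close>, and deleted if that pendant lies in \<open>P\<close>; centre vertices represent themselves.
  Adjacent vertices of \<open>G\<close> then have representatives at distance at most 2, so halving the labels
  gives a path-labelling of \<open>G - X\<close> with levels of size at most \<open>2g(kn)\<close>. A leaf interior whose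
  adhesion set lies entirely in \<open>P\<close> is cut off from the rest of \<open>G - X\<close> and becomes a level of its
  own, of size at most \<open>w\<close>.
\<close>

lemma verts_del_verts [simp]: "verts (del_verts G X) = verts G - X"
  unfolding del_verts_def verts_def by simp

lemma edges_del_verts [simp]: "edges (del_verts G X) = {e \<in> edges G. e \<inter> X = {}}"
  unfolding del_verts_def edges_def by simp

lemma verts_torso [simp]: "verts (torso G ET B t) = B t"
  unfolding torso_def verts_def by simp

lemma edges_torso:
  "edges (torso G ET B t) = {e \<in> edges G. e \<subseteq> B t} \<union>
     {{u, v} | u v t'. u \<noteq> v \<and> {t, t'} \<in> ET \<and> u \<in> B t \<inter> B t' \<and> v \<in> B t \<inter> B t'}"
  unfolding torso_def edges_def by simp

lemma is_graph_finite_verts: "is_graph G \<Longrightarrow> finite (verts G)"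
  by (simp add: is_graph_def)

lemma is_graph_edge_subset: "is_graph G \<Longrightarrow> e \<in> edges G \<Longrightarrow> e \<subseteq> verts G"
  unfolding is_graph_def by auto

lemma pos_increasing_mono:
  assumes "pos_increasing f" "1 \<le> m" "m \<le> m'"
  shows "f m \<le> f m'"
  using assms unfolding pos_increasing_def by (cases "m = m'") (auto intro: less_imp_le)

text \<open>The levels of a path-labelling are the parts of a path-partition.\<close>

definition path_labelling :: "graph \<Rightarrow> (nat \<Rightarrow> nat) \<Rightarrow> real \<Rightarrow> bool" where
  "path_labelling G lab W \<longleftrightarrow>
     (\<forall>x\<in>verts G. \<forall>y\<in>verts G. {x, y} \<in> edges G \<longrightarrow> lab x \<le> Suc (lab y)) \<and>
     (\<forall>x\<in>verts G. real (card {y \<in> verts G. lab y = lab x}) \<le> W)"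

lemma path_labelling_mono:
  "path_labelling G lab W \<Longrightarrow> W \<le> W' \<Longrightarrow> path_labelling G lab W'"
  unfolding path_labelling_def by force

lemma path_labelling_empty: "verts G = {} \<Longrightarrow> path_labelling G lab W"
  unfolding path_labelling_def by simp

lemma has_path_partition_width_if_path_labelling:
  assumes "path_labelling G lab W"
  shows "has_path_partition_width G W"
proof -
  define level where "level i = {x \<in> verts G. lab x = i}" for i
  define \<P> where "\<P> = level ` lab ` verts G"
  define index where "index Q = the_elem (lab ` Q)" for Q
  have lab_edge: "lab x \<le> Suc (lab y)" if "x \<in> verts G" "y \<in> verts G" "{x, y} \<in> edges G" for x y
    using assms that unfolding path_labelling_def by blast
  have index_level: "index (level i) = i" if "i \<in> lab ` verts G" for i
  proof -
    have "lab ` level i = {i}" using that unfolding level_def by auto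
    then show ?thesis unfolding index_def by simp
  qed
  have "P \<inter> Q = {}" if P: "P \<in> \<P>" and Q: "Q \<in> \<P>" and "P \<noteq> Q" for P Q
  proof -
    obtain i j where "P = level i" "Q = level j" using P Q unfolding \<P>_def by blast
    with \<open>P \<noteq> Q\<close> show ?thesis unfolding level_def by auto
  qed
  moreover have "\<Union>\<P> = verts G"
    unfolding \<P>_def level_def by blast
  ultimately have "is_partition G \<P>"
    unfolding is_partition_def by simp
  moreover have "inj_on index \<P>"
    unfolding \<P>_def by (rule inj_onI) (metis (no_types, lifting) imageE index_level)
  moreover have "index P = Suc (index Q) \<or> index Q = Suc (index P)"
    if P: "P \<in> \<P>" and Q: "Q \<in> \<P>" and adjacent: "parts_adjacent G P Q" for P Q
  proof -
    obtain i j where ij: "i \<in> lab ` verts G" "j \<in> lab ` verts G" "P = level i" "Q = level j"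
      using P Q unfolding \<P>_def by blast
    from adjacent obtain u v where "u \<in> P" "v \<in> Q" "{u, v} \<in> edges G" "P \<noteq> Q"
      unfolding parts_adjacent_def by blast
    then have "u \<in> verts G" "v \<in> verts G" "lab u = i" "lab v = j" "i \<noteq> j" "{v, u} \<in> edges G"
      using ij(3,4) unfolding level_def by (auto simp: insert_commute)
    then have "i \<le> Suc j" "j \<le> Suc i" "i \<noteq> j"
      using lab_edge \<open>{u, v} \<in> edges G\<close> by fastforce+
    then show ?thesis using ij index_level by auto
  qed
  moreover have "real (card (level (lab x))) \<le> W" if "x \<in> verts G" for x
    using assms that unfolding path_labelling_def level_def by blast
  then have "width_le \<P> W"
    unfolding width_le_def \<P>_def by blast
  ultimately show ?thesis
    unfolding has_path_partition_width_def is_path_partition_def by blast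
qed

lemma path_labelling_if_path_partition:
  assumes "is_path_partition G \<P>" "width_le \<P> W" "finite (verts G)"
  obtains lab where "path_labelling G lab W"
proof -
  obtain index :: "nat set \<Rightarrow> nat" where index: "inj_on index \<P>"
    and adjacent: "\<And>P Q. P \<in> \<P> \<Longrightarrow> Q \<in> \<P> \<Longrightarrow> parts_adjacent G P Q \<Longrightarrow>
                      index P = Suc (index Q) \<or> index Q = Suc (index P)"
    using assms(1) unfolding is_path_partition_def by blast
  have cover: "\<Union>\<P> = verts G"
    and disjoint: "\<And>P Q. P \<in> \<P> \<Longrightarrow> Q \<in> \<P> \<Longrightarrow> P \<noteq> Q \<Longrightarrow> P \<inter> Q = {}"
    using assms(1) unfolding is_path_partition_def is_partition_def by blast+
  define part where "part x = (THE Q. Q \<in> \<P> \<and> x \<in> Q)" for x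
  have part: "part x \<in> \<P> \<and> x \<in> part x" if "x \<in> verts G" for x
  proof -
    have "x \<in> \<Union>\<P>" using that cover by simp
    then obtain Q where Q: "Q \<in> \<P>" "x \<in> Q" by blast
    have "part x = Q" unfolding part_def
      by (rule the_equality) (use Q disjoint in auto)
    with Q show ?thesis by simp
  qed
  define lab where "lab x = index (part x)" for x
  have "lab x \<le> Suc (lab y)" if "x \<in> verts G" "y \<in> verts G" "{x, y} \<in> edges G" for x y
  proof (cases "part x = part y")
    case False
    then have "parts_adjacent G (part x) (part y)"
      using part that unfolding parts_adjacent_def by blast
    then show ?thesis using adjacent part that unfolding lab_def by fastforce
  qed (simp add: lab_def)
  moreover have "real (card {y \<in> verts G. lab y = lab x}) \<le> W" if "x \<in> verts G" for x
  proof -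
    have "{y \<in> verts G. lab y = lab x} \<subseteq> part x"
      using part that inj_onD[OF index] unfolding lab_def by blast
    moreover have "finite (part x)"
      using part[OF that] cover assms(3) by (metis Union_upper finite_subset)
    ultimately have "card {y \<in> verts G. lab y = lab x} \<le> card (part x)" by (rule card_mono[rotated])
    moreover have "real (card (part x)) \<le> W" using assms(2) part[OF that] unfolding width_le_def by blast
    ultimately show ?thesis by linarith
  qed
  ultimately show ?thesis using that unfolding path_labelling_def by blast
qed

lemma has_fan_partition_path_labelling:
  assumes "has_fan_partition G a b" "finite (verts G)"
  obtains P lab where "P \<subseteq> verts G" "real (card P) \<le> a" "path_labelling (del_verts G P) lab b"
proof -
  obtain \<P> P where partition: "is_partition G \<P>" "P \<in> \<P>" and "real (card P) \<le> a"
    and path: "is_path_partition (del_verts G P) (\<P> - {P})" "width_le (\<P> - {P}) b"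
    using assms(1) unfolding has_fan_partition_def by blast
  have "finite (verts (del_verts G P))" using assms(2) by simp
  with path obtain lab where "path_labelling (del_verts G P) lab b"
    by (rule path_labelling_if_path_partition)
  moreover have "P \<subseteq> verts G" using partition unfolding is_partition_def by blast
  ultimately show ?thesis using that \<open>real (card P) \<le> a\<close> by blast
qed

lemma admits_fan_partitions_path_labelling:
  assumes "admits_fan_partitions C f g" "pos_increasing f" "pos_increasing g"
    and "C G" "finite (verts G)" "card (verts G) \<le> m" "1 \<le> m"
  obtains P lab where "P \<subseteq> verts G" "real (card P) \<le> f m" "path_labelling (del_verts G P) lab (g m)"
proof (cases "verts G = {}")
  case True
  have "f m > 0" using assms(2,7) unfolding pos_increasing_def by simp
  then show ?thesis using that[of "{}" id] path_labelling_empty True by simp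
next
  case False
  then have "1 \<le> card (verts G)" using assms(5) by (simp add: Suc_leI card_gt_0_iff)
  then have "has_fan_partition G (f (card (verts G))) (g (card (verts G)))"
    using assms(1,4) unfolding admits_fan_partitions_def by blast
  then obtain P lab where "P \<subseteq> verts G" "real (card P) \<le> f (card (verts G))"
      and "path_labelling (del_verts G P) lab (g (card (verts G)))"
    using assms(5) by (rule has_fan_partition_path_labelling)
  moreover have "f (card (verts G)) \<le> f m" "g (card (verts G)) \<le> g m"
    using pos_increasing_mono assms(2,3,6) \<open>1 \<le> card (verts G)\<close> by blast+
  ultimately show ?thesis
    using that[of P lab] path_labelling_mono[of "del_verts G P" lab] by simp
qed

definition pendant :: "nat set \<Rightarrow> nat \<times> nat \<Rightarrow> nat" where
  "pendant V p = Suc (Max (insert 0 V)) + prod_encode p"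

lemma pendant_notin: "finite V \<Longrightarrow> pendant V p \<notin> V"
  unfolding pendant_def using Max_ge[of "insert 0 V"] by fastforce

lemma pendant_eq_iff [simp]: "pendant V p = pendant V q \<longleftrightarrow> p = q"
  unfolding pendant_def by (simp add: prod_encode_eq)

definition attach_pendants :: "graph \<Rightarrow> (nat \<times> nat) set \<Rightarrow> graph" where
  "attach_pendants H Z = (verts H \<union> pendant (verts H) ` Z,
     edges H \<union> (\<lambda>p. {snd p, pendant (verts H) p}) ` Z)"

lemma verts_attach_pendants [simp]:
  "verts (attach_pendants H Z) = verts H \<union> pendant (verts H) ` Z"
  unfolding attach_pendants_def verts_def by simp

lemma edges_attach_pendants [simp]:
  "edges (attach_pendants H Z) = edges H \<union> (\<lambda>p. {snd p, pendant (verts H) p}) ` Z"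
  unfolding attach_pendants_def edges_def by simp

context
  fixes H :: graph and Z :: "(nat \<times> nat) set"
  assumes graph: "is_graph H" and anchors: "snd ` Z \<subseteq> verts H"
begin

lemma pendant_notin_verts: "pendant (verts H) p \<notin> verts H"
  using pendant_notin[OF is_graph_finite_verts[OF graph]] .

lemma is_graph_attach_pendants:
  assumes "finite Z"
  shows "is_graph (attach_pendants H Z)"
  unfolding is_graph_def
proof (intro conjI ballI)
  show "finite (verts (attach_pendants H Z))" using is_graph_finite_verts[OF graph] assms by simp
next
  fix e assume "e \<in> edges (attach_pendants H Z)"
  then consider "e \<in> edges H" | p where "p \<in> Z" "e = {snd p, pendant (verts H) p}"
    by auto
  then show "\<exists>u v. e = {u, v} \<and> u \<noteq> v \<and>
      u \<in> verts (attach_pendants H Z) \<and> v \<in> verts (attach_pendants H Z)"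
  proof cases
    case 1
    then obtain u v where "e = {u, v}" "u \<noteq> v" "u \<in> verts H" "v \<in> verts H"
      using graph unfolding is_graph_def by meson
    then show ?thesis by auto
  next
    case 2
    then have "snd p \<in> verts H" "pendant (verts H) p \<notin> verts H"
      using anchors pendant_notin_verts by auto
    with 2 show ?thesis by (intro exI[of _ "snd p"] exI[of _ "pendant (verts H) p"]) auto
  qed
qed

lemma degree_pendant:
  assumes "p \<in> Z"
  shows "degree (attach_pendants H Z) (pendant (verts H) p) = 1"
proof -
  let ?q = "pendant (verts H) p"
  have "?q \<notin> e" if "e \<in> edges H" for e
    using is_graph_edge_subset[OF graph that] pendant_notin_verts by blast
  moreover have "?q \<noteq> snd p'" if "p' \<in> Z" for p'
    using that anchors pendant_notin_verts by blast
  ultimately have "{u \<in> verts (attach_pendants H Z). {?q, u} \<in> edges (attach_pendants H Z)} = {snd p}"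
    using assms anchors by (auto simp: doubleton_eq_iff)
  then show ?thesis unfolding degree_def by simp
qed

lemma del_verts_pendants: "del_verts (attach_pendants H Z) (pendant (verts H) ` Z) = H"
proof -
  have "e \<inter> pendant (verts H) ` Z = {}" if "e \<in> edges H" for e
    using is_graph_edge_subset[OF graph that] pendant_notin_verts by blast
  then have "edges (del_verts (attach_pendants H Z) (pendant (verts H) ` Z)) = edges H"
    by auto
  moreover have "verts (del_verts (attach_pendants H Z) (pendant (verts H) ` Z)) = verts H"
    using pendant_notin_verts by auto
  ultimately show ?thesis by (metis prod.collapse verts_def edges_def)
qed

lemma hat_class_attach_pendants: "C H \<Longrightarrow> finite Z \<Longrightarrow> hat_class C (attach_pendants H Z)"
  unfolding hat_class_def
  using is_graph_attach_pendants degree_pendant del_verts_pendants by auto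

lemma card_verts_attach_pendants:
  assumes "finite Z"
  shows "card (verts (attach_pendants H Z)) = card (verts H) + card Z"
proof -
  have "card (pendant (verts H) ` Z) = card Z"
    by (rule card_image) (simp add: inj_on_def)
  moreover have "verts H \<inter> pendant (verts H) ` Z = {}"
    using pendant_notin_verts by auto
  ultimately show ?thesis
    using card_Un_disjoint[OF is_graph_finite_verts[OF graph] finite_imageI[OF assms]]
    by (simp only: verts_attach_pendants)
qed

end

locale star_decomposed =
  fixes G :: graph and VS :: "'b set" and ES :: "'b set set" and r :: 'b and B :: "'b \<Rightarrow> nat set"
  assumes graph: "is_graph G" and decomposition: "is_star_decomposition G VS ES r B"
begin

lemma centre: "r \<in> VS"
  and star_edges: "ES = {{r, s} | s. s \<in> VS \<and> s \<noteq> r}"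
  using decomposition unfolding is_star_decomposition_def is_star_def by auto

lemma tree_decomposition: "is_tree_decomposition G VS ES B"
  using decomposition unfolding is_star_decomposition_def by simp

lemma bag_subset_verts: "t \<in> VS \<Longrightarrow> B t \<subseteq> verts G"
  using tree_decomposition unfolding is_tree_decomposition_def by simp

lemma finite_verts_G: "finite (verts G)"
  using is_graph_finite_verts[OF graph] .

lemma finite_centre: "finite (B r)"
  using finite_subset[OF bag_subset_verts[OF centre] finite_verts_G] .

lemma centre_leaf_edge: "s \<in> VS \<Longrightarrow> s \<noteq> r \<Longrightarrow> {r, s} \<in> ES"
  using star_edges by blast

lemma leaf_unique:
  assumes "s \<in> VS" "s' \<in> VS" "x \<in> B s" "x \<in> B s'" "x \<notin> B r"
  shows "s = s'"
proof -
  define S where "S = {t \<in> VS. x \<in> B t}"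
  have "x \<in> verts G" using bag_subset_verts assms(1,3) by blast
  then have "connected_in ES S"
    using tree_decomposition unfolding S_def is_tree_decomposition_def by simp
  then have path: "(\<lambda>a b. a \<in> S \<and> b \<in> S \<and> {a, b} \<in> ES)\<^sup>*\<^sup>* s s'"
    using assms(1-4) unfolding connected_in_def S_def by simp
  have no_step: "\<not> (a \<in> S \<and> b \<in> S \<and> {a, b} \<in> ES)" for a b
  proof
    assume step: "a \<in> S \<and> b \<in> S \<and> {a, b} \<in> ES"
    then obtain s0 where "{a, b} = {r, s0}" using star_edges by blast
    then have "r \<in> S" using step by (auto simp: doubleton_eq_iff)
    with assms(5) show False unfolding S_def by simp
  qed
  from path show ?thesis by (rule converse_rtranclpE) (use no_step in auto)
qed

definition leaf :: "nat \<Rightarrow> 'b" where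
  "leaf x = (SOME s. s \<in> VS \<and> x \<in> B s)"

lemma leaf_in_bag:
  assumes "x \<in> verts G"
  shows "leaf x \<in> VS" "x \<in> B (leaf x)"
proof -
  have "{t \<in> VS. x \<in> B t} \<noteq> {}"
    using tree_decomposition assms unfolding is_tree_decomposition_def by simp
  then have "\<exists>s. s \<in> VS \<and> x \<in> B s" by blast
  then have "leaf x \<in> VS \<and> x \<in> B (leaf x)" unfolding leaf_def by (rule someI_ex)
  then show "leaf x \<in> VS" "x \<in> B (leaf x)" by simp_all
qed

lemma leaf_eqI: "s \<in> VS \<Longrightarrow> x \<in> B s \<Longrightarrow> x \<notin> B r \<Longrightarrow> leaf x = s"
  using leaf_unique leaf_in_bag bag_subset_verts by blast

lemma leaf_ne_centre: "x \<in> verts G \<Longrightarrow> x \<notin> B r \<Longrightarrow> leaf x \<noteq> r"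
  using leaf_in_bag by force

lemma edge_in_leaf_bag:
  assumes "{x, y} \<in> edges G" "x \<in> verts G" "x \<notin> B r"
  shows "y \<in> B (leaf x)"
proof -
  obtain t where "t \<in> VS" "{x, y} \<subseteq> B t"
    using tree_decomposition assms(1) unfolding is_tree_decomposition_def by blast
  moreover from this have "leaf x = t" using leaf_eqI assms(3) by simp
  ultimately show ?thesis by simp
qed

definition adhesion_set :: "nat \<Rightarrow> nat set" where
  "adhesion_set x = B r \<inter> B (leaf x)"

definition leaf_interior :: "nat \<Rightarrow> nat set" where
  "leaf_interior x = B (leaf x) - B r"

lemma leaf_eq_if_mem_leaf_interior:
  assumes "x \<in> verts G" "y \<in> leaf_interior x"
  shows "leaf y = leaf x"
  using assms leaf_eqI leaf_in_bag unfolding leaf_interior_def by simp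

lemma finite_leaf_interior: "x \<in> verts G \<Longrightarrow> finite (leaf_interior x)"
  unfolding leaf_interior_def
  using finite_subset[OF bag_subset_verts finite_verts_G] leaf_in_bag by blast

lemma card_adhesion_set:
  assumes "adhesion_le ES B k" "x \<in> verts G" "x \<notin> B r"
  shows "card (adhesion_set x) \<le> k"
  using assms centre_leaf_edge[OF leaf_in_bag(1) leaf_ne_centre]
  unfolding adhesion_le_def adhesion_set_def by blast

lemma adhesion_set_torso_edge:
  assumes "x \<in> verts G" "x \<notin> B r" "u \<in> adhesion_set x" "v \<in> adhesion_set x" "u \<noteq> v"
  shows "{u, v} \<in> edges (torso G ES B r)"
proof -
  have "{r, leaf x} \<in> ES" using centre_leaf_edge leaf_in_bag leaf_ne_centre assms(1,2) by blast
  with assms(3-5) show ?thesis unfolding edges_torso adhesion_set_def by blast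
qed

lemma centre_edge_torso_edge:
  "{u, v} \<in> edges G \<Longrightarrow> {u, v} \<subseteq> B r \<Longrightarrow> {u, v} \<in> edges (torso G ES B r)"
  by (simp add: edges_torso)

lemma is_graph_torso: "is_graph (torso G ES B r)"
  unfolding is_graph_def
proof (intro conjI ballI)
  show "finite (verts (torso G ES B r))"
    using finite_centre by simp
next
  fix e assume "e \<in> edges (torso G ES B r)"
  then consider "e \<in> edges G" "e \<subseteq> B r" | u v where "e = {u, v}" "u \<noteq> v" "u \<in> B r" "v \<in> B r"
    unfolding edges_torso by blast
  then show "\<exists>u v. e = {u, v} \<and> u \<noteq> v \<and> u \<in> verts (torso G ES B r) \<and> v \<in> verts (torso G ES B r)"
  proof cases
    case 1
    then obtain u v where "e = {u, v}" "u \<noteq> v" using graph unfolding is_graph_def by meson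
    with 1 show ?thesis by auto
  qed auto
qed

definition attachments :: "(nat \<times> nat) set" where
  "attachments = (SIGMA x:verts G - B r. adhesion_set x)"

definition pendant_graph :: graph where
  "pendant_graph = attach_pendants (torso G ES B r) attachments"

lemma finite_attachments: "finite attachments"
  using finite_centre finite_verts_G unfolding attachments_def adhesion_set_def by auto

lemma attachment_anchors: "snd ` attachments \<subseteq> verts (torso G ES B r)"
  unfolding attachments_def adhesion_set_def by auto

lemma hat_class_pendant_graph: "H (torso G ES B r) \<Longrightarrow> hat_class H pendant_graph"
  unfolding pendant_graph_def
  using hat_class_attach_pendants[OF is_graph_torso attachment_anchors _ finite_attachments] .

lemma card_verts_pendant_graph:
  assumes "adhesion_le ES B k" "1 \<le> k"
  shows "card (verts pendant_graph) \<le> k * card (verts G)"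
proof -
  have centre_verts: "B r \<subseteq> verts G" using bag_subset_verts[OF centre] .
  have "card attachments = (\<Sum>x\<in>verts G - B r. card (adhesion_set x))"
    unfolding attachments_def using finite_verts_G finite_centre
    by (simp add: card_SigmaI adhesion_set_def)
  also have "\<dots> \<le> k * card (verts G - B r)"
    using sum_mono[of "verts G - B r" "\<lambda>x. card (adhesion_set x)" "\<lambda>_. k"]
      card_adhesion_set[OF assms(1)] by (simp add: mult.commute)
  finally have "card (verts pendant_graph) \<le> card (B r) + k * card (verts G - B r)"
    unfolding pendant_graph_def
    using card_verts_attach_pendants[OF is_graph_torso attachment_anchors finite_attachments] by simp
  also have "\<dots> \<le> k * card (B r) + k * card (verts G - B r)" using assms(2) by simp
  also have "\<dots> = k * card (verts G)"
    using card_Diff_subset[OF finite_centre centre_verts]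
      card_mono[OF finite_verts_G centre_verts] by (simp add: algebra_simps)
  finally show ?thesis .
qed

lemma finite_verts_pendant_graph: "finite (verts pendant_graph)"
  using is_graph_attach_pendants[OF is_graph_torso attachment_anchors finite_attachments]
  unfolding pendant_graph_def by (simp add: is_graph_def)

end

locale pendant_labelled = star_decomposed +
  fixes P :: "nat set" and mu :: "nat \<Rightarrow> nat" and W :: real
  assumes P_subset: "P \<subseteq> verts pendant_graph"
    and labelling: "path_labelling (del_verts pendant_graph P) mu W"
begin

abbreviation labelled_verts :: "nat set" where
  "labelled_verts \<equiv> verts pendant_graph - P"

lemma mu_step:
  assumes "a \<in> labelled_verts" "b \<in> labelled_verts" "{a, b} \<in> edges pendant_graph \<or> a = b"
  shows "mu a \<le> Suc (mu b)"
  using assms labelling unfolding path_labelling_def by auto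

lemma card_mu_level: "a \<in> labelled_verts \<Longrightarrow> real (card {b \<in> labelled_verts. mu b = mu a}) \<le> W"
  using labelling unfolding path_labelling_def by simp

lemma card_mu_half_level:
  assumes "a \<in> labelled_verts"
  shows "real (card {b \<in> labelled_verts. mu b div 2 = mu a div 2}) \<le> 2 * W"
proof -
  define level where "level j = {b \<in> labelled_verts. mu b = j}" for j
  have finite_level: "finite (level j)" for j
    unfolding level_def using finite_verts_pendant_graph by simp
  have "1 \<le> card (level (mu a))"
    using assms finite_level by (simp add: Suc_le_eq card_gt_0_iff level_def) blast
  then have "0 \<le> W" using card_mu_level[OF assms] unfolding level_def by linarith
  have level_le: "real (card (level j)) \<le> W" for j
  proof (cases "level j = {}")
    case False
    then obtain b where "b \<in> level j" by blast
    then have "level j = {c \<in> labelled_verts. mu c = mu b}" "b \<in> labelled_verts" unfolding level_def by auto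
    then show ?thesis using card_mu_level by simp
  qed (simp add: \<open>0 \<le> W\<close>)
  have "{b \<in> labelled_verts. mu b div 2 = mu a div 2} \<subseteq> level (2 * (mu a div 2)) \<union> level (Suc (2 * (mu a div 2)))"
    unfolding level_def by auto
  then have "card {b \<in> labelled_verts. mu b div 2 = mu a div 2}
      \<le> card (level (2 * (mu a div 2))) + card (level (Suc (2 * (mu a div 2))))"
    using finite_level by (meson card_Un_le card_mono finite_UnI order_trans)
  then show ?thesis using level_le[of "2 * (mu a div 2)"] level_le[of "Suc (2 * (mu a div 2))"] by linarith
qed

definition anchored :: "nat \<Rightarrow> bool" where
  "anchored x \<longleftrightarrow> adhesion_set x - P \<noteq> {}"

definition anchor :: "nat \<Rightarrow> nat" where
  "anchor x = (SOME v. v \<in> adhesion_set x - P)"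

definition tracked :: "nat \<Rightarrow> bool" where
  "tracked x \<longleftrightarrow> x \<in> B r \<or> anchored x"

definition image_vertex :: "nat \<Rightarrow> nat" where
  "image_vertex x = (if x \<in> B r then x else pendant (B r) (x, anchor x))"

definition deleted :: "nat set" where
  "deleted = {x \<in> verts G. tracked x \<and> image_vertex x \<in> P}"

text \<open>
  An untracked vertex lies in a leaf interior whose adhesion set is contained in \<open>P\<close>; such an
  interior has no edges to the rest of \<open>G - deleted\<close> and gets a level of its own above all others.
\<close>

definition label :: "nat \<Rightarrow> nat" where
  "label x = (if tracked x then mu (image_vertex x) div 2
              else Suc (Max (insert 0 (mu ` verts pendant_graph))) + Min (leaf_interior x))"

lemma anchor: "anchored x \<Longrightarrow> anchor x \<in> adhesion_set x - P"
  unfolding anchored_def anchor_def by (rule someI_ex) blast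

lemma centre_mem_labelled: "x \<in> B r \<Longrightarrow> x \<notin> P \<Longrightarrow> x \<in> labelled_verts"
  by (simp add: pendant_graph_def)

lemma image_vertex_mem_labelled:
  assumes "x \<in> verts G - deleted" "tracked x"
  shows "image_vertex x \<in> labelled_verts"
proof (cases "x \<in> B r")
  case False
  then have "(x, anchor x) \<in> attachments"
    using assms anchor unfolding tracked_def attachments_def by auto
  with False assms show ?thesis
    unfolding image_vertex_def deleted_def pendant_graph_def by auto
qed (use assms in \<open>auto simp: deleted_def image_vertex_def pendant_graph_def\<close>)

lemma pendant_step:
  assumes "x \<in> verts G - deleted" "x \<notin> B r" "anchored x"
  shows "mu (image_vertex x) \<le> Suc (mu (anchor x))" "mu (anchor x) \<le> Suc (mu (image_vertex x))"
proof -
  have "(x, anchor x) \<in> attachments" using assms anchor unfolding attachments_def by auto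
  then have "{anchor x, image_vertex x} \<in> edges pendant_graph"
    using assms(2) unfolding pendant_graph_def image_vertex_def by force
  moreover have "image_vertex x \<in> labelled_verts" using image_vertex_mem_labelled assms unfolding tracked_def by blast
  moreover have "anchor x \<in> labelled_verts"
    using anchor[OF assms(3)] centre_mem_labelled unfolding adhesion_set_def by blast
  ultimately show "mu (image_vertex x) \<le> Suc (mu (anchor x))" "mu (anchor x) \<le> Suc (mu (image_vertex x))"
    using mu_step by (auto simp: insert_commute)
qed

lemma adhesion_step:
  assumes "x \<in> verts G" "x \<notin> B r" "u \<in> adhesion_set x - P" "v \<in> adhesion_set x - P"
  shows "mu u \<le> Suc (mu v)"
proof -
  have "{u, v} \<in> edges pendant_graph \<or> u = v"
    using adhesion_set_torso_edge[OF assms(1,2)] assms(3,4) by (auto simp: pendant_graph_def)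
  moreover have "u \<in> labelled_verts" "v \<in> labelled_verts" using assms(3,4) centre_mem_labelled unfolding adhesion_set_def by auto
  ultimately show ?thesis using mu_step by blast
qed

lemma inj_on_image_vertex: "inj_on image_vertex (verts G)"
proof (rule inj_onI)
  fix x y assume "x \<in> verts G" "y \<in> verts G" "image_vertex x = image_vertex y"
  moreover have "pendant (B r) p \<notin> B r" for p using pendant_notin[OF finite_centre] .
  ultimately show "x = y" unfolding image_vertex_def by (auto split: if_splits)
qed

lemma card_deleted_le: "card deleted \<le> card P"
proof (rule card_inj_on_le)
  show "inj_on image_vertex deleted"
    using inj_on_image_vertex by (rule inj_on_subset) (auto simp: deleted_def)
  show "image_vertex ` deleted \<subseteq> P" unfolding deleted_def by blast
  show "finite P" using finite_subset[OF P_subset finite_verts_pendant_graph] .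
qed

lemma tracked_edge:
  assumes edge: "{x, y} \<in> edges G" and x: "x \<in> verts G - deleted" and y: "y \<in> verts G - deleted"
    and "tracked x"
  shows "tracked y \<and> mu (image_vertex x) \<le> mu (image_vertex y) + 2"
proof -
  have central_not_P: "z \<notin> P" if "z \<in> verts G - deleted" "z \<in> B r" for z
    using that unfolding deleted_def tracked_def image_vertex_def by auto
  have edge': "{y, x} \<in> edges G" using edge by (simp add: insert_commute)
  consider "x \<in> B r" "y \<in> B r" | "x \<in> B r" "y \<notin> B r" | "x \<notin> B r" "y \<in> B r"
    | "x \<notin> B r" "y \<notin> B r" by blast
  then show ?thesis
  proof cases
    case 1
    then have "{x, y} \<in> edges pendant_graph"
      using centre_edge_torso_edge edge by (simp add: pendant_graph_def)
    moreover have "x \<in> labelled_verts" "y \<in> labelled_verts" using 1 centre_mem_labelled central_not_P x y by auto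
    ultimately have "mu x \<le> Suc (mu y)" using mu_step by blast
    then show ?thesis using 1 by (simp add: tracked_def image_vertex_def)
  next
    case 2
    then have "x \<in> adhesion_set y - P"
      using edge_in_leaf_bag[OF edge'] y central_not_P[OF x] unfolding adhesion_set_def by simp
    then have "anchored y" unfolding anchored_def by blast
    then have "mu x \<le> Suc (mu (anchor y))" "mu (anchor y) \<le> Suc (mu (image_vertex y))"
      using adhesion_step[OF _ 2(2) \<open>x \<in> adhesion_set y - P\<close> anchor] pendant_step[OF y 2(2)] y
      by auto
    then show ?thesis using 2 \<open>anchored y\<close> by (simp add: tracked_def image_vertex_def)
  next
    case 3
    then have "anchored x" using \<open>tracked x\<close> unfolding tracked_def by simp
    have "y \<in> adhesion_set x - P"
      using edge_in_leaf_bag[OF edge] x 3 central_not_P[OF y] unfolding adhesion_set_def by simp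
    then have "mu (image_vertex x) \<le> Suc (mu (anchor x))" "mu (anchor x) \<le> Suc (mu y)"
      using pendant_step[OF x 3(1) \<open>anchored x\<close>] adhesion_step[OF _ 3(1) anchor[OF \<open>anchored x\<close>]] x
      by auto
    then show ?thesis using 3 by (simp add: tracked_def image_vertex_def)
  next
    case 4
    then have "anchored x" using \<open>tracked x\<close> unfolding tracked_def by simp
    have "leaf y = leaf x"
      using leaf_eq_if_mem_leaf_interior edge_in_leaf_bag[OF edge] x 4 unfolding leaf_interior_def by simp
    then have "anchored y" "anchor y = anchor x"
      using \<open>anchored x\<close> unfolding anchored_def anchor_def adhesion_set_def by simp_all
    then show ?thesis
      using pendant_step[OF x 4(1) \<open>anchored x\<close>] pendant_step[OF y 4(2) \<open>anchored y\<close>]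
      by (simp add: tracked_def)
  qed
qed

lemma untracked_edge:
  assumes edge: "{x, y} \<in> edges G" and x: "x \<in> verts G - deleted" and y: "y \<in> verts G - deleted"
    and "\<not> tracked x"
  shows "\<not> tracked y \<and> leaf y = leaf x"
proof -
  have "x \<notin> B r" "\<not> anchored x" using \<open>\<not> tracked x\<close> unfolding tracked_def by auto
  have "y \<notin> B r"
  proof
    assume "y \<in> B r"
    then have "y \<notin> P" using y unfolding deleted_def tracked_def image_vertex_def by auto
    moreover have "y \<in> adhesion_set x"
      using edge_in_leaf_bag[OF edge] x \<open>x \<notin> B r\<close> \<open>y \<in> B r\<close> unfolding adhesion_set_def by simp
    ultimately show False using \<open>\<not> anchored x\<close> unfolding anchored_def by blast
  qed
  then have "leaf y = leaf x"
    using leaf_eq_if_mem_leaf_interior edge_in_leaf_bag[OF edge] x \<open>x \<notin> B r\<close> unfolding leaf_interior_def by simp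
  then show ?thesis
    using \<open>y \<notin> B r\<close> \<open>\<not> anchored x\<close> unfolding tracked_def anchored_def adhesion_set_def by simp
qed

lemma label_tracked_less:
  assumes "x \<in> verts G - deleted" "tracked x"
  shows "label x < Suc (Max (insert 0 (mu ` verts pendant_graph)))"
proof -
  have "mu (image_vertex x) \<le> Max (insert 0 (mu ` verts pendant_graph))"
    using image_vertex_mem_labelled[OF assms] finite_verts_pendant_graph by (intro Max_ge) auto
  then show ?thesis using assms(2) unfolding label_def by simp
qed

lemma same_label_tracked:
  assumes "x \<in> verts G - deleted" "label y = label x" "tracked x"
  shows "tracked y"
  using label_tracked_less[OF assms(1,3)] assms(2) unfolding label_def by (auto split: if_splits)

lemma label_edge:
  assumes "{x, y} \<in> edges G" "x \<in> verts G - deleted" "y \<in> verts G - deleted"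
  shows "label x \<le> Suc (label y)"
proof (cases "tracked x")
  case True
  with tracked_edge[OF assms] show ?thesis unfolding label_def by auto
next
  case False
  with untracked_edge[OF assms] show ?thesis unfolding label_def leaf_interior_def by simp
qed

lemma card_label_level:
  assumes small_leaves: "\<forall>s\<in>VS - {r}. real (card (B s - B r)) \<le> w"
    and x: "x \<in> verts G - deleted"
  shows "real (card {y \<in> verts G - deleted. label y = label x}) \<le> max (2 * W) w"
proof (cases "tracked x")
  case True
  let ?level = "{b \<in> labelled_verts. mu b div 2 = mu (image_vertex x) div 2}"
  have "image_vertex y \<in> ?level" if "y \<in> verts G - deleted" "label y = label x" for y
  proof -
    have "tracked y" using same_label_tracked[OF x that(2) True] .
    then show ?thesis using image_vertex_mem_labelled[OF that(1)] that(2) True unfolding label_def by simp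
  qed
  then have "image_vertex ` {y \<in> verts G - deleted. label y = label x} \<subseteq> ?level" by blast
  then have "card {y \<in> verts G - deleted. label y = label x} \<le> card ?level"
    using inj_on_subset[OF inj_on_image_vertex] finite_verts_pendant_graph
    by (intro card_inj_on_le) auto
  then show ?thesis using card_mu_half_level[OF image_vertex_mem_labelled[OF x True]] by linarith
next
  case False
  then have "x \<notin> B r" unfolding tracked_def by simp
  have leaf_x: "leaf x \<in> VS - {r}" using leaf_in_bag leaf_ne_centre x \<open>x \<notin> B r\<close> by blast
  have "x \<in> leaf_interior x" using leaf_in_bag x \<open>x \<notin> B r\<close> unfolding leaf_interior_def by simp
  then have min_leaf: "leaf (Min (leaf_interior z)) = leaf z" if "z \<in> verts G" "z \<in> leaf_interior z" for z
    using that leaf_eq_if_mem_leaf_interior Min_in finite_leaf_interior by blast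
  have "{y \<in> verts G - deleted. label y = label x} \<subseteq> leaf_interior x"
  proof
    fix y assume y: "y \<in> {y \<in> verts G - deleted. label y = label x}"
    then have "\<not> tracked y" using same_label_tracked[of y x] False by auto
    then have "y \<notin> B r" unfolding tracked_def by simp
    then have "y \<in> leaf_interior y" using leaf_in_bag y unfolding leaf_interior_def by simp
    have "Min (leaf_interior y) = Min (leaf_interior x)"
      using y False \<open>\<not> tracked y\<close> unfolding label_def by simp
    moreover have "y \<in> verts G" "x \<in> verts G" using x y by auto
    ultimately have "leaf y = leaf x"
      using min_leaf \<open>y \<in> leaf_interior y\<close> \<open>x \<in> leaf_interior x\<close> by metis
    then show "y \<in> leaf_interior x" using \<open>y \<in> leaf_interior y\<close> unfolding leaf_interior_def by simp
  qed
  then have "card {y \<in> verts G - deleted. label y = label x} \<le> card (leaf_interior x)"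
    using finite_leaf_interior x by (intro card_mono) auto
  moreover have "real (card (leaf_interior x)) \<le> w"
    using small_leaves leaf_x unfolding leaf_interior_def by blast
  ultimately show ?thesis by linarith
qed

lemma path_labelling_deleted:
  assumes "\<forall>s\<in>VS - {r}. real (card (B s - B r)) \<le> w"
  shows "path_labelling (del_verts G deleted) label (max (2 * W) w)"
  unfolding path_labelling_def using label_edge card_label_level[OF assms] by auto

end

theorem mainTheorem6:
  fixes k n :: nat and w :: real and f g :: "nat \<Rightarrow> real"
    and H :: "graph \<Rightarrow> bool" and G :: graph
    and VS :: "'b set" and ES :: "'b set set" and r :: 'b and B :: "'b \<Rightarrow> nat set"
  assumes "k \<ge> 1" and "n \<ge> 1" and "w > 0"
    and "pos_increasing f" and "pos_increasing g"
    and "graph_class H"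
    and "admits_fan_partitions (hat_class H) f g"
    and "is_graph G" and "card (verts G) = n"
    and "is_star_decomposition G VS ES r B"
    and "adhesion_le ES B k"
    and "H (torso G ES B r)"
    and "\<forall>s \<in> VS - {r}. real (card (B s - B r)) \<le> w"
  shows "\<exists>X \<subseteq> verts G. real (card X) \<le> f (k * n) \<and>
           has_path_partition_width (del_verts G X) (max (2 * g (k * n)) w)"
proof -
  interpret star_decomposed G VS ES r B
    using assms(8,10) by unfold_locales
  have "card (verts pendant_graph) \<le> k * n"
    using card_verts_pendant_graph[OF assms(11,1)] assms(9) by simp
  moreover have "1 \<le> k * n" using assms(1,2) by simp
  ultimately obtain P mu where "P \<subseteq> verts pendant_graph" and card_P: "real (card P) \<le> f (k * n)"
    and "path_labelling (del_verts pendant_graph P) mu (g (k * n))"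
    using admits_fan_partitions_path_labelling[OF assms(7,4,5) hat_class_pendant_graph[of H, OF assms(12)]
        finite_verts_pendant_graph] by blast
  then interpret pendant_labelled G VS ES r B P mu "g (k * n)"
    by unfold_locales
  have "deleted \<subseteq> verts G" unfolding deleted_def by blast
  moreover have "real (card deleted) \<le> f (k * n)" using card_deleted_le card_P by linarith
  moreover have "has_path_partition_width (del_verts G deleted) (max (2 * g (k * n)) w)"
    using has_path_partition_width_if_path_labelling path_labelling_deleted[OF assms(13)] .
  ultimately show ?thesis by blast
qed

end
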